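(* Let $F$ be an admissible nonlinearity and $\alpha>0$. Then for every $(t_0,x_0)\in D_F$, $$\int_{-\infty}^\infty\big\langle F(t,x,u^{\alpha,\epsilon}_{\mathrm{lin}}(t-t_0,x-x_0)),\,u^{\alpha,\epsilon}_{\mathrm{lin}}(t-t_0,x-x_0)\big\rangle_{L^2_x}dt=\int_{-\infty}^\infty\big\langle F(t_0,x_0,u^{\alpha,\epsilon}_{\mathrm{lin}}(t-t_0,x-x_0)),\,u^{\alpha,\epsilon}_{\mathrm{lin}}(t-t_0,x-x_0)\big\rangle_{L^2_x}dt+o_\alpha(\epsilon^8)$$ as $\epsilon\to0$.
   Context: A measurable $F:\mathbb{R}\times\mathbb{R}^3\times\mathbb{R}\to\mathbb{R}$ is admissible if $F(t,x,0)=0$, $|F(t,x,u)-F(t,x,v)|\lesssim(|u|^4+|v|^4)|u-v|$ for all $u,v$ uniformly in $t,x$, and $F(t,x,-u)=-F(t,x,u)$. $D_F$ is the set of points $(t,x)\in\mathbb{R}\times\mathbb{R}^3$ that are Lebesgue points of $(t,x)\mapsto F(t,x,u)$ for every rational $u$. With $f(s)=\max\{1-|s|,0\}$ and $r=|x|$, $u_{\mathrm{lin}}(t,x):=\frac{f(r-t)-f(r+t)}{r}$, and for $\alpha,\epsilon>0$, $u^{\alpha,\epsilon}_{\mathrm{lin}}(t,x):=\alpha\,u_{\mathrm{lin}}((\alpha/\epsilon)^2t,(\alpha/\epsilon)^2x)$. The $L^2_x$ inner product is over $x\in\mathbb{R}^3$. *)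

theory Defs
  imports "HOL-Analysis.Analysis" "HOL-Library.Landau_Symbols"
begin

definition admissible :: "(real \<Rightarrow> real^3 \<Rightarrow> real \<Rightarrow> real) \<Rightarrow> bool" where
  "admissible F \<longleftrightarrow>
     (\<lambda>(t, x, u). F t x u) \<in> borel_measurable borel \<and>
     (\<forall>t x. F t x 0 = 0) \<and>
     (\<exists>C. \<forall>t x u v. \<bar>F t x u - F t x v\<bar> \<le> C * (\<bar>u\<bar>^4 + \<bar>v\<bar>^4) * \<bar>u - v\<bar>) \<and>
     (\<forall>t x u. F t x (- u) = - F t x u)"

text \<open>Lebesgue point of a locally integrable function on a Euclidean space
  (balls in the product space real \<times> real^3 are Euclidean balls of R^4).\<close>
definition lebesgue_point :: "('a::euclidean_space \<Rightarrow> real) \<Rightarrow> 'a \<Rightarrow> bool" where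
  "lebesgue_point g p \<longleftrightarrow>
     (\<forall>r>0. set_integrable lborel (ball p r) g) \<and>
     ((\<lambda>r. (LINT q:ball p r|lborel. \<bar>g q - g p\<bar>) / measure lborel (ball p r))
        \<longlongrightarrow> 0) (at_right 0)"

definition D_F :: "(real \<Rightarrow> real^3 \<Rightarrow> real \<Rightarrow> real) \<Rightarrow> (real \<times> (real^3)) set" where
  "D_F F = {p. \<forall>u\<in>\<rat>. lebesgue_point (\<lambda>(t, x). F t x u) p}"

definition f_tri :: "real \<Rightarrow> real" where
  "f_tri s = max (1 - \<bar>s\<bar>) 0"

definition u_lin :: "real \<Rightarrow> real^3 \<Rightarrow> real" where
  "u_lin t x = (f_tri (norm x - t) - f_tri (norm x + t)) / norm x"

definition u_lin_ae :: "real \<Rightarrow> real \<Rightarrow> real \<Rightarrow> real^3 \<Rightarrow> real" where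
  "u_lin_ae \<alpha> \<epsilon> t x = \<alpha> * u_lin ((\<alpha>/\<epsilon>)^2 * t) (((\<alpha>/\<epsilon>)^2) *\<^sub>R x)"

end

theory Submission
  imports Defs "HOL-Real_Asymp.Real_Asymp"
begin

text \<open>
  Substituting \<open>(t, x) = (t0, x0) + (\<epsilon>/\<alpha>)^2 z\<close> turns both integrals into \<open>(\<epsilon>/\<alpha>)^8\<close> times
  integrals against the fixed profile \<open>U = \<alpha> u_lin\<close>, so it suffices that
  \<open>\<integral> (F((t0, x0) + z/\<lambda>, U z) - F((t0, x0), U z)) U z dz \<rightarrow> 0\<close> as \<open>\<lambda> = (\<alpha>/\<epsilon>)^2 \<rightarrow> \<infinity>\<close>.
  Since \<open>|F(q, u)| \<le> C |u|^5\<close> and \<open>|u_lin z| \<le> 4 / max 1 |z|\<close>, whose sixth power is integrable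
  on \<open>\<real>^4\<close>, the part of the integral outside a large ball is uniformly small. Inside the ball
  \<open>U\<close> is bounded; rounding \<open>U z\<close> to the grid \<open>(1/N)\<int>\<close> costs \<open>O(1/N)\<close> by the local
  Lipschitz bound, and for each of the finitely many grid values \<open>v\<close>, which are rational,
  the Lebesgue point property at \<open>(t0, x0)\<close> gives
  \<open>\<integral>\<^bsub>|z| < R\<^esub> |F((t0, x0) + z/\<lambda>, v) - F((t0, x0), v)| dz \<rightarrow> 0\<close>.
\<close>

section \<open>Affine changes of variables and Lebesgue points\<close>

lemma nn_integral_lborel_affine:
  fixes f :: "'a::euclidean_space \<Rightarrow> ennreal"
  assumes [measurable]: "f \<in> borel_measurable borel" and "c \<noteq> 0"
  shows "(\<integral>\<^sup>+x. f x \<partial>lborel) = ennreal (\<bar>c\<bar> ^ DIM('a)) * (\<integral>\<^sup>+x. f (t + c *\<^sub>R x) \<partial>lborel)"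
  by (subst lborel_affine[OF \<open>c \<noteq> 0\<close>, of t])
     (simp add: nn_integral_density nn_integral_distr nn_integral_cmult)

lemma integrable_lborel_affine:
  fixes f :: "'a::euclidean_space \<Rightarrow> 'b::{banach, second_countable_topology}"
  assumes "integrable lborel f" and "c \<noteq> 0"
  shows "integrable lborel (\<lambda>x. f (t + c *\<^sub>R x))"
  using assms borel_measurable_integrable[OF assms(1)] unfolding integrable_iff_bounded
  by (subst (asm) nn_integral_lborel_affine[where c=c and t=t]) (auto simp: ennreal_mult_less_top)

lemma integrable_lborel_affine_iff:
  fixes f :: "'a::euclidean_space \<Rightarrow> 'b::{banach, second_countable_topology}"
  assumes "c \<noteq> 0"
  shows "integrable lborel (\<lambda>x. f (t + c *\<^sub>R x)) \<longleftrightarrow> integrable lborel f"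
  using assms integrable_lborel_affine[of f c t]
    integrable_lborel_affine[of "\<lambda>x. f (t + c *\<^sub>R x)" "1 / c" "- t /\<^sub>R c"]
  by (auto simp: algebra_simps)

lemma integral_lborel_affine:
  fixes f :: "'a::euclidean_space \<Rightarrow> 'b::{banach, second_countable_topology}"
  assumes "c \<noteq> 0"
  shows "(\<integral>x. f x \<partial>lborel) = \<bar>c\<bar> ^ DIM('a) *\<^sub>R (\<integral>x. f (t + c *\<^sub>R x) \<partial>lborel)"
proof cases
  assume f[measurable]: "integrable lborel f"
  then show ?thesis
    using assms borel_measurable_integrable[OF f] integrable_lborel_affine[OF f assms, of t]
    by (subst lborel_affine[OF assms, of t]) (simp add: integral_density integral_distr)
next
  assume "\<not> integrable lborel f"
  with assms show ?thesis
    by (simp add: integrable_lborel_affine_iff not_integrable_integral_eq)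
qed

lemma integral_ball_rescaled:
  fixes f :: "'a::euclidean_space \<Rightarrow> real"
  assumes "l > 0"
  shows "(LINT z|lborel. indicator (ball 0 R) z * f (p + (1/l) *\<^sub>R z))
    = l ^ DIM('a) * (LINT q:ball p (R / l)|lborel. f q)"
proof -
  define \<phi> where "\<phi> q = indicator (ball p (R / l)) q * f q" for q
  have "p + (1/l) *\<^sub>R z \<in> ball p (R / l) \<longleftrightarrow> z \<in> ball 0 R" for z
    using assms by (simp add: dist_norm field_simps)
  then have "indicator (ball 0 R) z * f (p + (1/l) *\<^sub>R z) = \<phi> (p + (1/l) *\<^sub>R z)" for z
    by (simp add: \<phi>_def indicator_def)
  then have "(LINT z|lborel. indicator (ball 0 R) z * f (p + (1/l) *\<^sub>R z))
      = (LINT z|lborel. \<phi> (p + (1/l) *\<^sub>R z))"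
    by simp
  also have "\<dots> = l ^ DIM('a) * integral\<^sup>L lborel \<phi>"
    using assms integral_lborel_affine[of "1/l" \<phi> p] by (simp add: power_divide)
  also have "integral\<^sup>L lborel \<phi> = (LINT q:ball p (R / l)|lborel. f q)"
    by (simp add: set_lebesgue_integral_def \<phi>_def[abs_def])
  finally show ?thesis .
qed

lemma tendsto_lebesgue_point_rescaled:
  fixes g :: "'a::euclidean_space \<Rightarrow> real"
  assumes lp: "lebesgue_point g p" and "R > 0"
  shows "((\<lambda>l. LINT z|lborel. indicator (ball 0 R) z * \<bar>g (p + (1/l) *\<^sub>R z) - g p\<bar>) \<longlongrightarrow> 0) at_top"
proof -
  define avg where
    "avg r = (LINT q:ball p r|lborel. \<bar>g q - g p\<bar>) / measure lborel (ball p r)" for r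
  define V where "V = measure lborel (ball (0::'a) 1)"
  have integral: "(LINT z|lborel. indicator (ball 0 R) z * \<bar>g (p + (1/l) *\<^sub>R z) - g p\<bar>)
      = R ^ DIM('a) * V * avg (R / l)" if "l > 0" for l
  proof -
    have measure_ball: "measure lborel (ball p (R / l)) = (R / l) ^ DIM('a) * V"
      using that \<open>R > 0\<close> content_ball_conv_unit_ball[of "R / l" p] by (simp add: V_def)
    have "measure lborel (ball p (R / l)) \<noteq> 0"
      using that \<open>R > 0\<close> content_ball_pos[of "R / l" p] by (simp add: not_le)
    then have "(LINT q:ball p (R / l)|lborel. \<bar>g q - g p\<bar>) = avg (R / l) * measure lborel (ball p (R / l))"
      unfolding avg_def by simp
    also have "\<dots> = avg (R / l) * (R / l) ^ DIM('a) * V"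
      by (simp add: measure_ball)
    finally have "(LINT q:ball p (R / l)|lborel. \<bar>g q - g p\<bar>) = avg (R / l) * (R / l) ^ DIM('a) * V" .
    then show ?thesis
      using integral_ball_rescaled[OF that, where f="\<lambda>q. \<bar>g q - g p\<bar>" and R=R and p=p] that
      by (simp add: power_divide)
  qed
  have "((\<lambda>l. R / l) \<longlongrightarrow> 0) at_top"
    by (intro tendsto_divide_0[OF tendsto_const] filterlim_at_top_imp_at_infinity filterlim_ident)
  then have "filterlim (\<lambda>l. R / l) (at_right 0) at_top"
    by (rule tendsto_imp_filterlim_at_right)
       (use \<open>R > 0\<close> in \<open>auto intro: eventually_mono[OF eventually_gt_at_top[of 0]]\<close>)
  moreover have "(avg \<longlongrightarrow> 0) (at_right 0)"
    using lp unfolding lebesgue_point_def avg_def by blast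
  ultimately have "((\<lambda>l. avg (R / l)) \<longlongrightarrow> 0) at_top"
    by (rule filterlim_compose[rotated])
  then have "((\<lambda>l. R ^ DIM('a) * V * avg (R / l)) \<longlongrightarrow> 0) at_top"
    by (rule tendsto_mult_right_zero)
  then show ?thesis
    by (rule Lim_transform_eventually) (auto intro: eventually_mono[OF eventually_gt_at_top[of 0]] simp: integral)
qed

section \<open>Integrability of power decay\<close>

lemma summable_power_over_max_power:
  assumes "d + 2 \<le> k"
  shows "summable (\<lambda>n::nat. (real n + 1) ^ d / max 1 (real n) ^ k)"
proof (rule summable_comparison_test'[where N=1])
  show "summable (\<lambda>n. 2 ^ d * inverse (real n ^ 2))"
    by (intro summable_mult inverse_power_summable) auto
next
  fix n :: nat
  assume n: "1 \<le> n"
  have "real n ^ 2 \<le> real n ^ (k - d)"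
    using assms n by (intro power_increasing) auto
  moreover have "(real n + 1) ^ d \<le> 2 ^ d * real n ^ d"
    using n power_mono[of "real n + 1" "2 * real n" d] by (simp add: power_mult_distrib)
  ultimately have "real n ^ 2 * (real n + 1) ^ d \<le> real n ^ (k - d) * (2 ^ d * real n ^ d)"
    by (intro mult_mono) auto
  moreover have "real n ^ k = real n ^ d * real n ^ (k - d)"
    using assms by (simp flip: power_add)
  ultimately show "norm ((real n + 1) ^ d / max 1 (real n) ^ k) \<le> 2 ^ d * inverse (real n ^ 2)"
    using n by (simp add: field_simps max_def mult_ac)
qed

definition norm_shell :: "nat \<Rightarrow> 'a::real_normed_vector set" where
  "norm_shell n = {z. real n \<le> norm z \<and> norm z < real n + 1}"

lemma norm_shell_sets [measurable]: "norm_shell n \<in> sets (borel :: 'a::euclidean_space measure)"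
  unfolding norm_shell_def by measurable

lemma mem_norm_shell_floor_norm: "z \<in> norm_shell (nat \<lfloor>norm z\<rfloor>)"
  unfolding norm_shell_def by (simp add: of_int_floor_le)

lemma emeasure_norm_shell_le:
  "emeasure lborel (norm_shell n :: 'a::euclidean_space set)
    \<le> ennreal ((real n + 1) ^ DIM('a) * measure lborel (ball (0::'a) 1))"
proof -
  have "emeasure lborel (norm_shell n :: 'a set) \<le> emeasure lborel (ball (0::'a) (real n + 1))"
    unfolding norm_shell_def by (intro emeasure_mono) auto
  also have "\<dots> = ennreal (measure lborel (ball (0::'a) (real n + 1)))"
    using emeasure_lborel_ball_finite[of "0::'a" "real n + 1"]
    by (subst emeasure_eq_ennreal_measure) (auto simp: less_top)
  also have "\<dots> = ennreal ((real n + 1) ^ DIM('a) * measure lborel (ball (0::'a) 1))"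
    by (subst content_ball_conv_unit_ball) auto
  finally show ?thesis .
qed

lemma integrable_inverse_max_norm_power:
  assumes "DIM('a::euclidean_space) + 2 \<le> k"
  shows "integrable lborel (\<lambda>z::'a. 1 / max 1 (norm z) ^ k)"
proof (rule integrableI_bounded)
  show "(\<lambda>z::'a. 1 / max 1 (norm z) ^ k) \<in> borel_measurable lborel"
    by measurable
  define a where "a n = 1 / max 1 (real n) ^ k" for n :: nat
  define b where "b n = a n * ((real n + 1) ^ DIM('a) * measure lborel (ball (0::'a) 1))" for n
  have shell_cover: "ennreal (norm (1 / max 1 (norm z) ^ k)) \<le> (\<Sum>n. ennreal (a n) * indicator (norm_shell n) z)"
    for z :: 'a
  proof -
    have "max 1 (real (nat \<lfloor>norm z\<rfloor>)) \<le> max 1 (norm z)"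
      using of_int_floor_le[of "norm z"] by (auto simp: max_def)
    then have "1 / max 1 (norm z) ^ k \<le> a (nat \<lfloor>norm z\<rfloor>)"
      unfolding a_def by (intro divide_left_mono power_mono) auto
    then have "ennreal (norm (1 / max 1 (norm z) ^ k))
        \<le> ennreal (a (nat \<lfloor>norm z\<rfloor>)) * indicator (norm_shell (nat \<lfloor>norm z\<rfloor>)) z"
      using mem_norm_shell_floor_norm[of z] by (simp add: ennreal_leI)
    also have "\<dots> \<le> (\<Sum>n. ennreal (a n) * indicator (norm_shell n) z)"
      using sum_le_suminf[of "\<lambda>n. ennreal (a n) * indicator (norm_shell n) z" "{nat \<lfloor>norm z\<rfloor>}"]
      by (simp only: sum.insert finite.emptyI empty_iff sum.empty add_0_right
          summableI finite_insert zero_le simp_thms)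
    finally show ?thesis .
  qed
  have "summable b"
    using summable_mult2[OF summable_power_over_max_power[OF assms], of "measure lborel (ball (0::'a) 1)"]
    by (simp add: a_def b_def[abs_def])
  have "(\<integral>\<^sup>+ z. ennreal (norm (1 / max 1 (norm (z::'a)) ^ k)) \<partial>lborel)
      \<le> (\<integral>\<^sup>+ z. (\<Sum>n. ennreal (a n) * indicator (norm_shell n) (z::'a)) \<partial>lborel)"
    by (rule nn_integral_mono) (rule shell_cover)
  also have "\<dots> = (\<Sum>n. ennreal (a n) * emeasure lborel (norm_shell n :: 'a set))"
    by (subst nn_integral_suminf) (auto intro!: arg_cong[where f=suminf] nn_integral_cmult_indicator)
  also have "\<dots> \<le> (\<Sum>n. ennreal (b n))"
  proof (intro suminf_le summableI)
    fix n
    have "ennreal (a n) * emeasure lborel (norm_shell n :: 'a set)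
        \<le> ennreal (a n) * ennreal ((real n + 1) ^ DIM('a) * measure lborel (ball (0::'a) 1))"
      by (intro mult_left_mono emeasure_norm_shell_le) auto
    also have "\<dots> = ennreal (b n)"
      unfolding b_def by (rule ennreal_mult[symmetric]) (auto simp: a_def)
    finally show "ennreal (a n) * emeasure lborel (norm_shell n :: 'a set) \<le> ennreal (b n)" .
  qed
  also have "\<dots> = ennreal (suminf b)"
    by (rule suminf_ennreal2[OF _ \<open>summable b\<close>]) (simp add: a_def b_def)
  also have "\<dots> < \<infinity>"
    by simp
  finally show "(\<integral>\<^sup>+ z. ennreal (norm (1 / max 1 (norm (z::'a)) ^ k)) \<partial>lborel) < \<infinity>" .
qed

lemma integrable_small_outside_ball:
  fixes f :: "'a::euclidean_space \<Rightarrow> real"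
  assumes f: "integrable lborel f" and "e > 0"
  shows "\<exists>R>0. (LINT z|lborel. indicator (- ball 0 R) z * f z) < e"
proof -
  have "(\<lambda>n. LINT z|lborel. indicator (- ball 0 (real n)) z * f z) \<longlonglongrightarrow> (LINT z|(lborel::'a measure). 0)"
  proof (rule integral_dominated_convergence[where w="\<lambda>z. \<bar>f z\<bar>" and f="\<lambda>_. 0"
        and s="\<lambda>n z. indicator (- ball 0 (real n)) z * f z"])
    show "AE z in lborel. (\<lambda>n. indicator (- ball 0 (real n)) z * f z) \<longlonglongrightarrow> 0"
    proof (rule AE_I2)
      fix z :: 'a
      obtain m :: nat where "norm z < real m"
        using reals_Archimedean2 by blast
      then have "\<forall>\<^sub>F n in sequentially. indicator (- ball 0 (real n)) z * f z = 0"
        by (intro eventually_sequentiallyI[of m]) auto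
      then show "(\<lambda>n. indicator (- ball 0 (real n)) z * f z) \<longlonglongrightarrow> 0"
        by (rule tendsto_eventually)
    qed
  qed (use f in \<open>auto simp: indicator_def borel_measurable_integrable\<close>)
  then have "(\<lambda>n. LINT z|lborel. indicator (- ball 0 (real n)) z * f z) \<longlonglongrightarrow> 0"
    by simp
  from order_tendstoD(2)[OF this \<open>e > 0\<close>] eventually_gt_at_top[of 0]
  have "\<forall>\<^sub>F n in sequentially. 0 < real n \<and> (LINT z|lborel. indicator (- ball 0 (real n)) z * f z) < e"
    by eventually_elim auto
  then obtain n where "0 < real n" "(LINT z|lborel. indicator (- ball 0 (real n)) z * f z) < e"
    by (auto simp: eventually_sequentially)
  then show ?thesis
    by blast
qed

section \<open>Nonlinearities of quintic growth\<close>

text \<open>This abstracts \<^const>\<open>admissible\<close> with \<open>q = (t, x)\<close>.\<close>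

locale quintic_nonlinearity =
  fixes H :: "'a::euclidean_space \<Rightarrow> real \<Rightarrow> real" and C :: real
  assumes borel_measurable_uncurried: "(\<lambda>(q, u). H q u) \<in> borel_measurable borel"
    and zero: "H q 0 = 0"
    and lipschitz: "\<bar>H q u - H q v\<bar> \<le> C * (\<bar>u\<bar>^4 + \<bar>v\<bar>^4) * \<bar>u - v\<bar>"
begin

lemma constant_nonneg: "0 \<le> C"
  using lipschitz[of undefined 1 0] zero by simp

lemma abs_le: "\<bar>H q u\<bar> \<le> C * \<bar>u\<bar>^5"
  using lipschitz[of q u 0] zero by (simp add: power_Suc2 mult.assoc eval_nat_numeral)

lemma lipschitz_bounded:
  assumes "\<bar>u\<bar> \<le> K" and "\<bar>v\<bar> \<le> K"
  shows "\<bar>H q u - H q v\<bar> \<le> 2 * C * K^4 * \<bar>u - v\<bar>"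
proof -
  have "\<bar>u\<bar>^4 + \<bar>v\<bar>^4 \<le> 2 * K^4"
    using power_mono[OF assms(1), of 4] power_mono[OF assms(2), of 4] by simp
  then have "C * (\<bar>u\<bar>^4 + \<bar>v\<bar>^4) * \<bar>u - v\<bar> \<le> C * (2 * K^4) * \<bar>u - v\<bar>"
    using constant_nonneg by (intro mult_right_mono mult_left_mono) auto
  then show ?thesis
    using lipschitz[of q u v] by simp
qed

lemma borel_measurable_compose:
  assumes "a \<in> M \<rightarrow>\<^sub>M borel" and "U \<in> borel_measurable M"
  shows "(\<lambda>z. H (a z) (U z)) \<in> borel_measurable M"
proof -
  have "(\<lambda>z. (a z, U z)) \<in> M \<rightarrow>\<^sub>M borel"
    using assms by (simp flip: borel_prod)
  from measurable_compose[OF this borel_measurable_uncurried] show ?thesis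
    by simp
qed

lemma abs_times_le: "\<bar>H q u * u\<bar> \<le> C * u ^ 6"
proof -
  have "\<bar>H q u * u\<bar> \<le> C * \<bar>u\<bar>^5 * \<bar>u\<bar>"
    unfolding abs_mult by (intro mult_right_mono abs_le) auto
  also have "\<dots> = C * u ^ 6"
    by (simp add: abs_mult eval_nat_numeral)
  finally show ?thesis .
qed

lemma integrable_times:
  assumes "a \<in> M \<rightarrow>\<^sub>M borel" and "U \<in> borel_measurable M" and "integrable M (\<lambda>z. U z ^ 6)"
  shows "integrable M (\<lambda>z. H (a z) (U z) * U z)"
proof (rule Bochner_Integration.integrable_bound)
  show "integrable M (\<lambda>z. C * U z ^ 6)"
    using assms(3) by simp
  show "(\<lambda>z. H (a z) (U z) * U z) \<in> borel_measurable M"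
    using borel_measurable_compose[OF assms(1,2)] assms(2) by measurable
  show "AE z in M. norm (H (a z) (U z) * U z) \<le> norm (C * U z ^ 6)"
    using abs_times_le constant_nonneg by (simp add: abs_mult)
qed

lemma abs_diff_le_grid:
  fixes N :: nat and u M :: real
  assumes "\<bar>u\<bar> \<le> M" and "N > 0"
  shows "\<bar>H a u - H b u\<bar> \<le> 4 * C * (M + 1)^4 / N
    + (\<Sum>k\<in>{-\<lceil>N * M\<rceil>..\<lceil>N * M\<rceil>}. \<bar>H a (k / N) - H b (k / N)\<bar>)"
proof -
  define k where "k = \<lfloor>N * u\<rfloor>"
  define v where "v = k / N"
  have "k \<le> N * u" "N * u < k + 1"
    unfolding k_def by linarith+
  then have v: "v \<le> u" "u < v + 1 / N"
    using \<open>N > 0\<close> by (simp_all add: v_def field_simps)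
  have "1 / N \<le> 1"
    using \<open>N > 0\<close> by simp
  then have "\<bar>v\<bar> \<le> M + 1" "\<bar>u\<bar> \<le> M + 1" "\<bar>u - v\<bar> \<le> 1 / N"
    using v assms(1) by auto
  then have lip: "\<bar>H q u - H q v\<bar> \<le> 2 * C * (M + 1)^4 / N" for q
  proof -
    have "2 * C * (M + 1)^4 * \<bar>u - v\<bar> \<le> 2 * C * (M + 1)^4 * (1 / N)"
      using \<open>\<bar>u - v\<bar> \<le> 1 / N\<close> constant_nonneg by (intro mult_left_mono) auto
    then show ?thesis
      using lipschitz_bounded[of u "M + 1" v q] \<open>\<bar>u\<bar> \<le> M + 1\<close> \<open>\<bar>v\<bar> \<le> M + 1\<close> by simp
  qed
  have "k \<in> {-\<lceil>N * M\<rceil>..\<lceil>N * M\<rceil>}"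
  proof -
    have "real N * (- M) \<le> real N * u"
      using assms(1) by (intro mult_left_mono) auto
    then have "\<lfloor>real N * (- M)\<rfloor> \<le> k"
      unfolding k_def by (rule floor_mono)
    moreover have "real N * u \<le> real N * M"
      using assms(1) by (intro mult_left_mono) auto
    then have "real_of_int k \<le> of_int \<lceil>real N * M\<rceil>"
      using \<open>k \<le> N * u\<close> le_of_int_ceiling[of "real N * M"] by linarith
    ultimately show ?thesis
      by (simp add: floor_minus)
  qed
  then have "\<bar>H a v - H b v\<bar> \<le> (\<Sum>k\<in>{-\<lceil>N * M\<rceil>..\<lceil>N * M\<rceil>}. \<bar>H a (k / N) - H b (k / N)\<bar>)"
    unfolding v_def by (intro member_le_sum) auto
  moreover have "\<bar>H a u - H b u\<bar> \<le> \<bar>H a u - H a v\<bar> + \<bar>H a v - H b v\<bar> + \<bar>H b v - H b u\<bar>"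
    by linarith
  moreover have "4 * C * (M + 1)^4 / N = 2 * (2 * C * (M + 1)^4 / N)"
    by simp
  ultimately show ?thesis
    using lip[of a] lip[of b] abs_minus_commute[of "H b v" "H b u"] by linarith
qed

lemma integrable_rescaled_difference_on_ball:
  assumes [measurable]: "U \<in> borel_measurable borel" and U_le: "\<And>z. \<bar>U z\<bar> \<le> M"
  shows "integrable lborel (\<lambda>z. indicator (ball 0 R) z * \<bar>H (p + c *\<^sub>R z) (U z) - H p (U z)\<bar>)"
proof (rule integrableI_bounded_set[where A="ball 0 R" and B="2 * C * M^5"])
  have "(\<lambda>z. H (p + c *\<^sub>R z) (U z)) \<in> borel_measurable lborel" "(\<lambda>z. H p (U z)) \<in> borel_measurable lborel"
    by (auto intro!: borel_measurable_compose)
  then show "(\<lambda>z. indicator (ball 0 R) z * \<bar>H (p + c *\<^sub>R z) (U z) - H p (U z)\<bar>) \<in> borel_measurable lborel"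
    by (intro borel_measurable_times borel_measurable_indicator borel_measurable_abs borel_measurable_diff) auto
  have bound: "\<bar>H q (U z)\<bar> \<le> C * M^5" for q z
  proof -
    have "C * \<bar>U z\<bar>^5 \<le> C * M^5"
      using U_le constant_nonneg by (intro mult_left_mono power_mono) auto
    then show ?thesis
      using abs_le[of q "U z"] by linarith
  qed
  show "AE z in lborel. z \<in> ball 0 R \<longrightarrow>
      norm (indicator (ball 0 R) z * \<bar>H (p + c *\<^sub>R z) (U z) - H p (U z)\<bar>) \<le> 2 * C * M^5"
  proof (intro AE_I2 impI)
    fix z :: 'a
    assume "z \<in> ball 0 R"
    then show "norm (indicator (ball 0 R) z * \<bar>H (p + c *\<^sub>R z) (U z) - H p (U z)\<bar>) \<le> 2 * C * M^5"
      using bound[of "p + c *\<^sub>R z" z] bound[of p z] abs_triangle_ineq4[of "H (p + c *\<^sub>R z) (U z)" "H p (U z)"]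
      by simp
  qed
qed (auto simp: emeasure_lborel_ball_finite[unfolded infinity_ennreal_def])

lemma integral_rescaled_difference_on_ball_le:
  fixes N :: nat and M :: real
  assumes U_measurable: "U \<in> borel_measurable borel" and U_le: "\<And>z. \<bar>U z\<bar> \<le> M"
    and "N > 0"
  shows "(LINT z|lborel. indicator (ball 0 R) z * \<bar>H (p + c *\<^sub>R z) (U z) - H p (U z)\<bar>)
    \<le> measure lborel (ball (0::'a) R) * (4 * C * (M + 1)^4 / N)
      + (\<Sum>k\<in>{-\<lceil>N * M\<rceil>..\<lceil>N * M\<rceil>}.
          LINT z|lborel. indicator (ball 0 R) z * \<bar>H (p + c *\<^sub>R z) (k / N) - H p (k / N)\<bar>)"
proof -
  define K where "K = 4 * C * (M + 1)^4 / N"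
  define grid_sum where "grid_sum z = (\<Sum>k\<in>{-\<lceil>N * M\<rceil>..\<lceil>N * M\<rceil>}.
      indicator (ball 0 R) z * \<bar>H (p + c *\<^sub>R z) (k / N) - H p (k / N)\<bar>)" for z
  have grid_integrable: "integrable lborel
      (\<lambda>z. indicator (ball 0 R) z * \<bar>H (p + c *\<^sub>R z) (k / N) - H p (k / N)\<bar>)" for k :: int
    by (rule integrable_rescaled_difference_on_ball[where M="\<bar>k / N\<bar>"]) auto
  then have grid_sum_integrable: "integrable lborel grid_sum"
    unfolding grid_sum_def by (intro Bochner_Integration.integrable_sum)
  have constant_integrable: "integrable lborel (\<lambda>z. indicator (ball 0 R) (z::'a) * K)"
    using integrable_indicator[of "ball 0 R" lborel K]
    by (simp add: emeasure_lborel_ball_finite[unfolded infinity_ennreal_def])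
  have "(LINT z|lborel. indicator (ball 0 R) z * \<bar>H (p + c *\<^sub>R z) (U z) - H p (U z)\<bar>)
      \<le> (LINT z|lborel. indicator (ball 0 R) z * K + grid_sum z)"
  proof (rule integral_mono)
    show "integrable lborel (\<lambda>z. indicator (ball 0 R) z * K + grid_sum z)"
      using constant_integrable grid_sum_integrable by (rule Bochner_Integration.integrable_add)
    show "indicator (ball 0 R) z * \<bar>H (p + c *\<^sub>R z) (U z) - H p (U z)\<bar>
        \<le> indicator (ball 0 R) z * K + grid_sum z" for z
      using abs_diff_le_grid[OF U_le[of z] \<open>N > 0\<close>, of "p + c *\<^sub>R z" p]
      by (auto simp: grid_sum_def K_def indicator_def)
  qed (rule integrable_rescaled_difference_on_ball[OF U_measurable U_le])
  also have "\<dots> = (LINT z|lborel. indicator (ball 0 R) (z::'a) * K) + integral\<^sup>L lborel grid_sum"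
    by (simp only: Bochner_Integration.integral_add[OF constant_integrable grid_sum_integrable])
  also have "\<dots> = measure lborel (ball (0::'a) R) * K + (\<Sum>k\<in>{-\<lceil>N * M\<rceil>..\<lceil>N * M\<rceil>}.
      LINT z|lborel. indicator (ball 0 R) z * \<bar>H (p + c *\<^sub>R z) (k / N) - H p (k / N)\<bar>)"
    unfolding grid_sum_def Bochner_Integration.integral_sum[OF grid_integrable] by simp
  finally show ?thesis
    unfolding K_def .
qed

lemma tendsto_rescaled_difference_on_ball:
  assumes leb: "\<And>u. u \<in> \<rat> \<Longrightarrow> lebesgue_point (\<lambda>q. H q u) p"
    and U_measurable: "U \<in> borel_measurable borel" and U_le: "\<And>z. \<bar>U z\<bar> \<le> M" and "R > 0"
  shows "((\<lambda>l. LINT z|lborel. indicator (ball 0 R) z * \<bar>H (p + (1/l) *\<^sub>R z) (U z) - H p (U z)\<bar>)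
      \<longlongrightarrow> 0) at_top"
proof (rule tendstoI)
  fix \<eta> :: real
  assume "\<eta> > 0"
  define V where "V = measure lborel (ball (0::'a) R)"
  have "0 \<le> V * (4 * C * (M + 1)^4)"
    using constant_nonneg by (simp add: V_def)
  obtain N :: nat where "N > 0" and N: "V * (4 * C * (M + 1)^4 / N) < \<eta> / 2"
  proof -
    obtain n :: nat where "2 * (V * (4 * C * (M + 1)^4)) / \<eta> < n"
      using reals_Archimedean2 by blast
    with \<open>\<eta> > 0\<close> \<open>0 \<le> V * (4 * C * (M + 1)^4)\<close> show ?thesis
      by (intro that[of "Suc n"]) (auto simp: field_simps)
  qed
  define S where "S k l = (LINT z|lborel.
      indicator (ball 0 R) z * \<bar>H (p + (1/l) *\<^sub>R z) (k / N) - H p (k / N)\<bar>)" for k :: int and l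
  have "((\<lambda>l. S k l) \<longlongrightarrow> 0) at_top" for k
    unfolding S_def using leb
    by (intro tendsto_lebesgue_point_rescaled \<open>R > 0\<close>) auto
  then have "((\<lambda>l. \<Sum>k\<in>{-\<lceil>N * M\<rceil>..\<lceil>N * M\<rceil>}. S k l) \<longlongrightarrow> 0) at_top"
    by (rule tendsto_null_sum)
  then have "\<forall>\<^sub>F l in at_top. (\<Sum>k\<in>{-\<lceil>N * M\<rceil>..\<lceil>N * M\<rceil>}. S k l) < \<eta> / 2"
    using \<open>\<eta> > 0\<close> by (intro order_tendstoD(2)) auto
  then show "\<forall>\<^sub>F l in at_top.
      dist (LINT z|lborel. indicator (ball 0 R) z * \<bar>H (p + (1/l) *\<^sub>R z) (U z) - H p (U z)\<bar>) 0 < \<eta>"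
  proof eventually_elim
    case (elim l)
    have "(LINT z|lborel. indicator (ball 0 R) z * \<bar>H (p + (1/l) *\<^sub>R z) (U z) - H p (U z)\<bar>) < \<eta>"
      using integral_rescaled_difference_on_ball_le[OF U_measurable U_le \<open>N > 0\<close>, of R p "1/l"] N elim
      unfolding S_def V_def by linarith
    then show ?case
      by (simp add: integral_nonneg_AE)
  qed
qed

lemma abs_integral_rescaled_difference_le:
  assumes U_measurable[measurable]: "U \<in> borel_measurable borel" and U_le: "\<And>z. \<bar>U z\<bar> \<le> M"
    and U6: "integrable lborel (\<lambda>z. U z ^ 6)"
  shows "\<bar>LINT z|lborel. (H (p + c *\<^sub>R z) (U z) - H p (U z)) * U z\<bar>
    \<le> M * (LINT z|lborel. indicator (ball 0 R) z * \<bar>H (p + c *\<^sub>R z) (U z) - H p (U z)\<bar>)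
      + 2 * C * (LINT z|lborel. indicator (- ball 0 R) z * U z ^ 6)"
proof -
  define G where "G z = (H (p + c *\<^sub>R z) (U z) - H p (U z)) * U z" for z
  define B where "B z = M * (indicator (ball 0 R) z * \<bar>H (p + c *\<^sub>R z) (U z) - H p (U z)\<bar>)
    + 2 * C * (indicator (- ball 0 R) z * U z ^ 6)" for z
  have on_ball: "integrable lborel (\<lambda>z. indicator (ball 0 R) z * \<bar>H (p + c *\<^sub>R z) (U z) - H p (U z)\<bar>)"
    by (rule integrable_rescaled_difference_on_ball[OF U_measurable U_le])
  have outside: "integrable lborel (\<lambda>z. indicator (- ball 0 R) z * U z ^ 6)"
    using integrable_mult_indicator[OF _ U6, of "- ball 0 R"] by simp
  have "integrable lborel G"
    unfolding G_def left_diff_distrib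
    by (intro Bochner_Integration.integrable_diff integrable_times U6) auto
  moreover have "integrable lborel B"
    unfolding B_def using on_ball outside
    by (intro Bochner_Integration.integrable_add integrable_mult_right) auto
  moreover have "norm (G z) \<le> B z" for z
  proof (cases "z \<in> ball 0 R")
    case True
    have "\<bar>G z\<bar> \<le> \<bar>H (p + c *\<^sub>R z) (U z) - H p (U z)\<bar> * M"
      unfolding G_def abs_mult by (intro mult_left_mono U_le) auto
    with True show ?thesis
      by (simp add: B_def mult.commute)
  next
    case False
    have "\<bar>G z\<bar> \<le> \<bar>H (p + c *\<^sub>R z) (U z) * U z\<bar> + \<bar>H p (U z) * U z\<bar>"
      unfolding G_def left_diff_distrib by (rule abs_triangle_ineq4)
    also have "\<dots> \<le> 2 * C * U z ^ 6"
      using abs_times_le[of "p + c *\<^sub>R z" "U z"] abs_times_le[of p "U z"] by linarith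
    finally show ?thesis
      using False by (simp add: B_def)
  qed
  ultimately have "norm (integral\<^sup>L lborel G) \<le> integral\<^sup>L lborel B"
    by (intro Bochner_Integration.integral_norm_bound_integral) auto
  also have "\<dots> = M * (LINT z|lborel. indicator (ball 0 R) z * \<bar>H (p + c *\<^sub>R z) (U z) - H p (U z)\<bar>)
      + 2 * C * (LINT z|lborel. indicator (- ball 0 R) z * U z ^ 6)"
    unfolding B_def using on_ball outside
    by (simp only: Bochner_Integration.integral_add integrable_mult_right integral_mult_right_zero)
  finally show ?thesis
    by (simp add: G_def[abs_def])
qed

lemma tendsto_rescaled_difference:
  assumes leb: "\<And>u. u \<in> \<rat> \<Longrightarrow> lebesgue_point (\<lambda>q. H q u) p"
    and U_measurable: "U \<in> borel_measurable borel" and U_le: "\<And>z. \<bar>U z\<bar> \<le> M"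
    and U6: "integrable lborel (\<lambda>z. U z ^ 6)"
  shows "((\<lambda>l. LINT z|lborel. (H (p + (1/l) *\<^sub>R z) (U z) - H p (U z)) * U z) \<longlongrightarrow> 0) at_top"
proof (rule tendstoI)
  fix \<eta> :: real
  assume "\<eta> > 0"
  define tail where "tail R = (LINT z|lborel. indicator (- ball 0 R) z * U z ^ 6)" for R
  obtain R where "R > 0" and R: "tail R < \<eta> / (4 * C + 1)"
    using integrable_small_outside_ball[OF U6, of "\<eta> / (4 * C + 1)"] \<open>\<eta> > 0\<close> constant_nonneg
    unfolding tail_def by auto
  have "2 * C * tail R \<le> 2 * C * (\<eta> / (4 * C + 1))"
    using R constant_nonneg by (intro mult_left_mono) auto
  also have "\<dots> \<le> \<eta> / 2"
    using \<open>\<eta> > 0\<close> constant_nonneg by (simp add: field_simps)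
  finally have tail_small: "2 * C * tail R \<le> \<eta> / 2" .
  have "((\<lambda>l. M * (LINT z|lborel. indicator (ball 0 R) z * \<bar>H (p + (1/l) *\<^sub>R z) (U z) - H p (U z)\<bar>))
      \<longlongrightarrow> 0) at_top"
    by (intro tendsto_mult_right_zero tendsto_rescaled_difference_on_ball[OF leb U_measurable U_le \<open>R > 0\<close>])
  then have "\<forall>\<^sub>F l in at_top.
      M * (LINT z|lborel. indicator (ball 0 R) z * \<bar>H (p + (1/l) *\<^sub>R z) (U z) - H p (U z)\<bar>) < \<eta> / 2"
    using \<open>\<eta> > 0\<close> by (intro order_tendstoD(2)) auto
  then show "\<forall>\<^sub>F l in at_top. dist (LINT z|lborel. (H (p + (1/l) *\<^sub>R z) (U z) - H p (U z)) * U z) 0 < \<eta>"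
  proof eventually_elim
    case (elim l)
    then show ?case
      using abs_integral_rescaled_difference_le[OF U_measurable U_le U6, of p "1/l" R] tail_small
      unfolding tail_def by simp
  qed
qed

end

section \<open>The linear wave profile\<close>

lemma abs_f_tri_diff_le: "\<bar>f_tri a - f_tri b\<bar> \<le> \<bar>a - b\<bar>"
  by (auto simp: f_tri_def)

lemma abs_u_lin_le_2: "\<bar>u_lin t x\<bar> \<le> 2"
proof (cases "x = 0")
  case False
  have "f_tri (norm x + t) = f_tri (- norm x - t)"
    by (simp add: f_tri_def)
  then have "\<bar>f_tri (norm x - t) - f_tri (norm x + t)\<bar> \<le> 2 * norm x"
    using abs_f_tri_diff_le[of "norm x - t" "- norm x - t"] by simp
  with False show ?thesis
    by (simp add: u_lin_def abs_div divide_le_eq)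
qed (simp add: u_lin_def)

text \<open>At \<open>x = 0\<close> both sides vanish by the convention \<open>a / 0 = 0\<close>.\<close>

lemma abs_u_lin_le_inverse_norm: "\<bar>u_lin t x\<bar> \<le> 1 / norm x"
proof (cases "x = 0")
  case False
  have "\<bar>f_tri (norm x - t) - f_tri (norm x + t)\<bar> \<le> 1"
    by (auto simp: f_tri_def)
  with False show ?thesis
    by (simp add: u_lin_def abs_div divide_le_eq)
qed (simp add: u_lin_def)

lemma u_lin_eq_0_outside_cone:
  assumes "norm x + 1 < \<bar>t\<bar>"
  shows "u_lin t x = 0"
proof -
  have "1 \<le> \<bar>norm x - t\<bar>" "1 \<le> \<bar>norm x + t\<bar>"
    using assms norm_ge_zero[of x] by arith+
  then show ?thesis
    by (simp add: u_lin_def f_tri_def)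
qed

lemma abs_u_lin_le_decay: "\<bar>u_lin t x\<bar> \<le> 4 / max 1 (norm (t, x))"
proof (cases "norm (t, x) \<le> 2 \<or> norm x + 1 < \<bar>t\<bar>")
  case True
  have "2 \<le> 4 / max 1 (norm (t, x))" if "norm (t, x) \<le> 2"
    using that by (auto simp: max_def le_divide_eq)
  with True show ?thesis
    using abs_u_lin_le_2[of t x] u_lin_eq_0_outside_cone[of x t] by fastforce
next
  case False
  have "norm (t, x) \<le> \<bar>t\<bar> + norm x"
    using norm_Pair_le[of t x] by simp
  then have "norm (t, x) \<le> 4 * norm x"
    using False by linarith
  moreover have "0 < norm x" "0 < norm (t, x)"
    using calculation False by linarith+
  ultimately have "1 / norm x \<le> 4 / norm (t, x)"
    by (simp add: divide_simps)
  then show ?thesis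
    using abs_u_lin_le_inverse_norm[of t x] False by simp
qed

lemma borel_measurable_u_lin: "(\<lambda>z::real \<times> (real^3). u_lin (fst z) (snd z)) \<in> borel_measurable borel"
  unfolding u_lin_def f_tri_def borel_prod[symmetric] by measurable

lemma integrable_u_lin_power_6: "integrable lborel (\<lambda>z::real \<times> (real^3). u_lin (fst z) (snd z) ^ 6)"
proof (rule Bochner_Integration.integrable_bound)
  show "integrable lborel (\<lambda>z::real \<times> (real^3). 4 ^ 6 * (1 / max 1 (norm z) ^ 6))"
    by (intro integrable_mult_right integrable_inverse_max_norm_power) simp
  show "(\<lambda>z::real \<times> (real^3). u_lin (fst z) (snd z) ^ 6) \<in> borel_measurable lborel"
    using borel_measurable_u_lin by measurable
  have "\<bar>u_lin (fst z) (snd z)\<bar> ^ 6 \<le> (4 / max 1 (norm z)) ^ 6" for z :: "real \<times> (real^3)"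
    using abs_u_lin_le_decay[of "fst z" "snd z"] by (intro power_mono) auto
  then show "AE z in lborel. norm (u_lin (fst z) (snd z) ^ 6) \<le> norm (4 ^ 6 * (1 / max 1 (norm z) ^ 6))"
    by (simp add: power_abs power_divide)
qed

lemma integral_u_lin_ae_rescaled:
  fixes \<Phi> :: "real \<times> (real^3) \<Rightarrow> real \<Rightarrow> real" and p :: "real \<times> (real^3)"
  assumes "\<alpha> > 0" and "\<epsilon> > 0"
    and integrable: "integrable lborel (\<lambda>z. \<Phi> (p + (\<epsilon>/\<alpha>)^2 *\<^sub>R z) (\<alpha> * u_lin (fst z) (snd z)))"
  shows "(LINT t|lborel. LINT x|lborel. \<Phi> (t, x) (u_lin_ae \<alpha> \<epsilon> (t - fst p) (x - snd p)))
    = (\<epsilon>/\<alpha>)^8 * (LINT z|lborel. \<Phi> (p + (\<epsilon>/\<alpha>)^2 *\<^sub>R z) (\<alpha> * u_lin (fst z) (snd z)))"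
proof -
  define c where "c = (\<epsilon>/\<alpha>)^2"
  define A where "A q = \<Phi> q (u_lin_ae \<alpha> \<epsilon> (fst q - fst p) (snd q - snd p))" for q
  have "c \<noteq> 0"
    using assms by (simp add: c_def)
  have "(\<alpha>/\<epsilon>)^2 * c = 1"
    using assms by (simp add: c_def power_divide)
  then have A_rescaled: "A (p + c *\<^sub>R z) = \<Phi> (p + c *\<^sub>R z) (\<alpha> * u_lin (fst z) (snd z))" for z
    by (simp add: A_def u_lin_ae_def scaleR_scaleR mult.assoc[symmetric])
  have "integrable lborel (\<lambda>z. A (p + c *\<^sub>R z))"
    unfolding A_rescaled using integrable by (simp add: c_def)
  then have "integrable lborel A"
    using integrable_lborel_affine_iff[OF \<open>c \<noteq> 0\<close>] by blast
  then have "(LINT t|lborel. LINT x|lborel. A (t, x)) = integral\<^sup>L lborel A"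
    using pair_sigma_finite.integral_fst'[of lborel lborel A]
    by (simp add: lborel_prod pair_sigma_finite_def lborel.sigma_finite_measure_axioms)
  also have "\<dots> = c ^ 4 * (LINT z|lborel. A (p + c *\<^sub>R z))"
    using integral_lborel_affine[OF \<open>c \<noteq> 0\<close>, of A p] by (simp add: c_def)
  also have "\<dots> = c ^ 4 * (LINT z|lborel. \<Phi> (p + c *\<^sub>R z) (\<alpha> * u_lin (fst z) (snd z)))"
    by (simp only: A_rescaled)
  finally show ?thesis
    by (simp add: A_def c_def flip: power_mult)
qed

lemma pairing_difference_u_lin_ae_rescaled:
  fixes H :: "real \<times> (real^3) \<Rightarrow> real \<Rightarrow> real" and p :: "real \<times> (real^3)"
  assumes "quintic_nonlinearity H C" and "\<alpha> > 0" and "\<epsilon> > 0"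
  defines "U \<equiv> \<lambda>z. \<alpha> * u_lin (fst z) (snd z)"
    and "W \<equiv> \<lambda>t x. u_lin_ae \<alpha> \<epsilon> (t - fst p) (x - snd p)"
  shows "(LINT t|lborel. LINT x|lborel. H (t, x) (W t x) * W t x)
      - (LINT t|lborel. LINT x|lborel. H p (W t x) * W t x)
    = (\<epsilon>/\<alpha>)^8 * (LINT z|lborel. (H (p + (\<epsilon>/\<alpha>)^2 *\<^sub>R z) (U z) - H p (U z)) * U z)"
proof -
  interpret quintic_nonlinearity H C
    by (rule assms(1))
  have U_measurable: "U \<in> borel_measurable borel"
    unfolding U_def using borel_measurable_u_lin by measurable
  have U6: "integrable lborel (\<lambda>z. U z ^ 6)"
    unfolding U_def power_mult_distrib using integrable_u_lin_power_6 by simp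
  have moving: "integrable lborel (\<lambda>z. H (p + (\<epsilon>/\<alpha>)^2 *\<^sub>R z) (U z) * U z)"
    and fixed: "integrable lborel (\<lambda>z. H p (U z) * U z)"
    by (intro integrable_times U_measurable U6; simp)+
  have "(LINT t|lborel. LINT x|lborel. H (t, x) (W t x) * W t x)
      = (\<epsilon>/\<alpha>)^8 * (LINT z|lborel. H (p + (\<epsilon>/\<alpha>)^2 *\<^sub>R z) (U z) * U z)"
    using integral_u_lin_ae_rescaled[of \<alpha> \<epsilon> "\<lambda>q u. H q u * u" p] moving assms(2,3)
    by (simp add: U_def W_def)
  moreover have "(LINT t|lborel. LINT x|lborel. H p (W t x) * W t x)
      = (\<epsilon>/\<alpha>)^8 * (LINT z|lborel. H p (U z) * U z)"
    using integral_u_lin_ae_rescaled[of \<alpha> \<epsilon> "\<lambda>q u. H p u * u" p] fixed assms(2,3)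
    by (simp add: U_def W_def)
  ultimately show ?thesis
    using Bochner_Integration.integral_diff[OF moving fixed] by (simp add: right_diff_distrib left_diff_distrib)
qed

lemma tendsto_rescaled_difference_u_lin:
  fixes H :: "real \<times> (real^3) \<Rightarrow> real \<Rightarrow> real" and p :: "real \<times> (real^3)"
  assumes "quintic_nonlinearity H C" and "\<alpha> > 0"
    and "\<And>u. u \<in> \<rat> \<Longrightarrow> lebesgue_point (\<lambda>q. H q u) p"
  defines "U \<equiv> \<lambda>z. \<alpha> * u_lin (fst z) (snd z)"
  shows "((\<lambda>l. LINT z|lborel. (H (p + (1/l) *\<^sub>R z) (U z) - H p (U z)) * U z) \<longlongrightarrow> 0) at_top"
proof (rule quintic_nonlinearity.tendsto_rescaled_difference[OF assms(1,3)])
  show "U \<in> borel_measurable borel"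
    unfolding U_def using borel_measurable_u_lin by measurable
  show "\<bar>U z\<bar> \<le> 2 * \<alpha>" for z
    using abs_u_lin_le_2 assms(2) by (simp add: U_def abs_mult)
  show "integrable lborel (\<lambda>z. U z ^ 6)"
    unfolding U_def power_mult_distrib using integrable_u_lin_power_6 by simp
qed

lemma admissible_imp_quintic_nonlinearity:
  assumes "admissible F"
  obtains C where "quintic_nonlinearity (\<lambda>q u. F (fst q) (snd q) u) C"
proof -
  obtain C where measurable: "(\<lambda>(t, x, u). F t x u) \<in> borel_measurable borel"
    and zero: "\<forall>t x. F t x 0 = 0"
    and lipschitz: "\<forall>t x u v. \<bar>F t x u - F t x v\<bar> \<le> C * (\<bar>u\<bar>^4 + \<bar>v\<bar>^4) * \<bar>u - v\<bar>"
    using assms unfolding admissible_def by blast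
  have "(\<lambda>(q :: real \<times> (real^3), u :: real). (fst q, snd q, u)) \<in> borel \<rightarrow>\<^sub>M borel"
    unfolding borel_prod[symmetric] by measurable
  from measurable_comp[OF this measurable]
  have "(\<lambda>(q, u). F (fst q) (snd q) u) \<in> borel_measurable borel"
    by (simp add: comp_def case_prod_beta)
  with zero lipschitz show ?thesis
    by (intro that[of C]) (unfold_locales, auto)
qed

lemma lebesgue_point_of_mem_D_F:
  assumes "(t0, x0) \<in> D_F F" and "u \<in> \<rat>"
  shows "lebesgue_point (\<lambda>q. F (fst q) (snd q) u) (t0, x0)"
proof -
  have "(\<lambda>q. F (fst q) (snd q) u) = (\<lambda>(t, x). F t x u)"
    by (simp add: fun_eq_iff)
  then show ?thesis
    using assms unfolding D_F_def by simp
qed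

theorem lemma3p3:
  fixes F :: "real \<Rightarrow> real^3 \<Rightarrow> real \<Rightarrow> real" and \<alpha> t0 :: real and x0 :: "real^3"
  assumes "admissible F" and "\<alpha> > 0" and "(t0, x0) \<in> D_F F"
  shows "(\<lambda>\<epsilon>. (LINT t|lborel. LINT x|lborel.
                F t x (u_lin_ae \<alpha> \<epsilon> (t - t0) (x - x0)) * u_lin_ae \<alpha> \<epsilon> (t - t0) (x - x0))
            - (LINT t|lborel. LINT x|lborel.
                F t0 x0 (u_lin_ae \<alpha> \<epsilon> (t - t0) (x - x0)) * u_lin_ae \<alpha> \<epsilon> (t - t0) (x - x0)))
         \<in> o[at_right 0](\<lambda>\<epsilon>. \<epsilon> ^ 8)" (is "?D \<in> _")
proof -
  define p where "p = (t0, x0)"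
  define H where "H q u = F (fst q) (snd q) u" for q :: "real \<times> (real^3)" and u
  define U where "U z = \<alpha> * u_lin (fst z) (snd z)" for z :: "real \<times> (real^3)"
  define I where "I l = (LINT z|lborel. (H (p + (1/l) *\<^sub>R z) (U z) - H p (U z)) * U z)" for l
  obtain C where H: "quintic_nonlinearity H C"
    using admissible_imp_quintic_nonlinearity[OF assms(1)] unfolding H_def[abs_def] .
  have "(I \<longlongrightarrow> 0) at_top"
    using tendsto_rescaled_difference_u_lin[OF H assms(2), of p] lebesgue_point_of_mem_D_F[OF assms(3)]
    unfolding I_def U_def[abs_def] H_def[abs_def] p_def by simp
  moreover have "filterlim (\<lambda>\<epsilon>. (\<alpha>/\<epsilon>)^2) at_top (at_right 0)"
    using assms(2) by real_asymp
  ultimately have "((\<lambda>\<epsilon>. I ((\<alpha>/\<epsilon>)^2) / \<alpha>^8) \<longlongrightarrow> 0) (at_right 0)"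
    using tendsto_divide_zero filterlim_compose[of I] by blast
  moreover have "?D \<epsilon> / \<epsilon>^8 = I ((\<alpha>/\<epsilon>)^2) / \<alpha>^8" if "\<epsilon> > 0" for \<epsilon>
    using pairing_difference_u_lin_ae_rescaled[OF H assms(2) that, of p] that assms(2)
    by (simp add: H_def p_def U_def I_def power_divide)
  ultimately have "((\<lambda>\<epsilon>. ?D \<epsilon> / \<epsilon>^8) \<longlongrightarrow> 0) (at_right 0)"
    by (elim Lim_transform_eventually) (auto intro: eventually_mono[OF eventually_at_right_less])
  then show ?thesis
    by (rule smalloI_tendsto) (auto intro: eventually_mono[OF eventually_at_right_less])
qed

end
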